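(* Let $p<q$ be coprime positive integers and $m$ a positive integer; put $k=\gcd(m,q-p)$ and $a=m/k$. Let $A=\mathbb C[X_0,\dots,X_4]$, graded by $\mathbb Z\times\mathbb Z/m\mathbb Z$ with $X_0$ of degree $(1,0)$, $X_1,X_2$ of degree $(-p,-1)$, $X_3,X_4$ of degree $(q,1)$, and for $s\in\mathbb C$ let $J_s=(X_0^{q-p},\;X_2,\;X_4,\;s-X_1^{aq}X_3^{ap})$. Then $\dim(A/J_1)_{(n,d)}\ge 1$ and $\dim(A/J_0)_{(n,d)}\ge 1$ for all $(n,d)\in\mathbb Z\times\mathbb Z/m\mathbb Z$.
   Context: The grading is the weight grading for the action of $G_0\times G_m$ ($G_0\cong\mathbb C^*$, $G_m\cong\mu_m$) on $\mathbb C^5$ given by $t\cdot(x_0,\dots,x_4)=(tx_0,t^{-p}x_1,t^{-p}x_2,t^qx_3,t^qx_4)$ and $\zeta\cdot(x_0,\dots,x_4)=(x_0,\zeta^{-1}x_1,\zeta^{-1}x_2,\zeta x_3,\zeta x_4)$. *)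

theory Defs
  imports Complex_Main "HOL-Library.Poly_Mapping" "HOL-Library.Numeral_Type" "HOL-Library.Extended_Nat"
begin

text \<open>The polynomial ring A = C[X_0,...,X_4]: finitely supported maps from monomials
  (exponent vectors, finitely supported maps 5 to nat) to complex coefficients,
  with the convolution product of Poly_Mapping.\<close>

type_synonym mono5 = "5 \<Rightarrow>\<^sub>0 nat"
type_synonym poly5 = "mono5 \<Rightarrow>\<^sub>0 complex"

definition Var :: "5 \<Rightarrow> poly5" where
  "Var i = Poly_Mapping.single (Poly_Mapping.single i 1) 1"

definition Const :: "complex \<Rightarrow> poly5" where
  "Const c = Poly_Mapping.single 0 c"

text \<open>The Z-component and the Z/mZ-component (as an integer representative) of the
  degree of a monomial, for the grading X_0 : (1,0), X_1,X_2 : (-p,-1), X_3,X_4 : (q,1).\<close>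

definition degZ :: "nat \<Rightarrow> nat \<Rightarrow> mono5 \<Rightarrow> int" where
  "degZ p q \<alpha> = int (Poly_Mapping.lookup \<alpha> 0) - int p * int (Poly_Mapping.lookup \<alpha> 1 + Poly_Mapping.lookup \<alpha> 2)
                 + int q * int (Poly_Mapping.lookup \<alpha> 3 + Poly_Mapping.lookup \<alpha> 4)"

definition degM :: "mono5 \<Rightarrow> int" where
  "degM \<alpha> = int (Poly_Mapping.lookup \<alpha> 3 + Poly_Mapping.lookup \<alpha> 4) - int (Poly_Mapping.lookup \<alpha> 1 + Poly_Mapping.lookup \<alpha> 2)"

definition graded_piece :: "nat \<Rightarrow> nat \<Rightarrow> nat \<Rightarrow> int \<Rightarrow> int \<Rightarrow> poly5 set" where
  "graded_piece p q m n d =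
     {f. \<forall>\<alpha>\<in>Poly_Mapping.keys f. degZ p q \<alpha> = n \<and> degM \<alpha> mod int m = d mod int m}"

definition ideal_gen :: "poly5 list \<Rightarrow> poly5 set" where
  "ideal_gen gs = {f. \<exists>rs. length rs = length gs \<and> f = sum_list (map2 (*) rs gs)}"

definition indep_mod :: "poly5 set \<Rightarrow> poly5 set \<Rightarrow> bool" where
  "indep_mod U S \<longleftrightarrow>
     (\<forall>c. (\<Sum>s\<in>S. Const (c s) * s) \<in> U \<longrightarrow> (\<forall>s\<in>S. c s = 0))"

text \<open>Dimension over C of the quotient V/(U \<inter> V) (possibly infinite).\<close>

definition quot_dim :: "poly5 set \<Rightarrow> poly5 set \<Rightarrow> enat" where
  "quot_dim V U = Sup {enat (card S) | S. finite S \<and> S \<subseteq> V \<and> indep_mod U S}"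

definition J_ideal :: "nat \<Rightarrow> nat \<Rightarrow> nat \<Rightarrow> complex \<Rightarrow> poly5 set" where
  "J_ideal p q a s = ideal_gen
     [Var 0 ^ (q - p), Var 2, Var 4, Const s - Var 1 ^ (a * q) * Var 3 ^ (a * p)]"

end

theory Submission
  imports Defs
begin

(* Choose a monomial X_0^i X_1^j X_3^l of degree (n, d) with i < q - p that is not divisible
   by X_1^(aq) X_3^(ap): it exists because multiplying by X_1^(aq) X_3^(ap) changes neither
   component of the degree (m divides a(q - p)), so j and l can be pushed down until one of them
   drops below aq resp. ap. Let mu_t be that monomial times (X_1^(aq) X_3^(ap))^t. The linear
   functional taking f to the sum over t of s^t times the coefficient of mu_t in f kills every
   monomial multiple of each generator of J_s, hence all of J_s, but is 1 on mu_0. So mu_0 is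
   nonzero in (A/J_s)_(n,d) for every s, not only for s = 0, 1. *)

lemma poly_mapping_add_single_induct [case_names zero add_single]:
  assumes "P 0" and "\<And>f \<alpha> b. P f \<Longrightarrow> P (f + Poly_Mapping.single \<alpha> b)"
  shows "P f"
proof (induction f rule: update_induct)
  case const
  show ?case by (fact assms(1))
next
  case (update f \<alpha> b)
  then have "Poly_Mapping.update \<alpha> b f = f + Poly_Mapping.single \<alpha> b"
    by (intro poly_mapping_eqI)
       (auto simp: lookup_update lookup_add lookup_single in_keys_iff when_def)
  with update.IH show ?case by (simp add: assms(2))
qed

definition pairing :: "('a \<Rightarrow> 'b) \<Rightarrow> ('a \<Rightarrow>\<^sub>0 'b::comm_semiring_1) \<Rightarrow> 'b" where
  "pairing w f = (\<Sum>\<alpha>\<in>Poly_Mapping.keys f. w \<alpha> * Poly_Mapping.lookup f \<alpha>)"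

lemma pairing_zero [simp]: "pairing w 0 = 0"
  by (simp add: pairing_def)

lemma pairing_zero_weight [simp]: "pairing (\<lambda>_. 0) f = 0"
  by (simp add: pairing_def)

lemma pairing_single [simp]: "pairing w (Poly_Mapping.single \<alpha> b) = w \<alpha> * b"
  by (simp add: pairing_def)

lemma pairing_add: "pairing w (f + g) = pairing w f + pairing w g"
  unfolding pairing_def by (rule setsum_keys_plus_distrib) (simp_all add: distrib_left)

lemma pairing_diff:
  fixes f g :: "'a \<Rightarrow>\<^sub>0 'b::comm_ring_1"
  shows "pairing w (f - g) = pairing w f - pairing w g"
  using pairing_add[of w "f - g" g] by simp

lemma pairing_single_mult:
  fixes g :: "'a::monoid_add \<Rightarrow>\<^sub>0 'b::comm_semiring_1"
  shows "pairing w (Poly_Mapping.single \<gamma> b * g) = b * pairing (\<lambda>\<alpha>. w (\<gamma> + \<alpha>)) g"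
  by (induction g rule: poly_mapping_add_single_induct)
     (simp_all add: distrib_left pairing_add mult_single ac_simps)

lemma pairing_mult:
  fixes f g :: "'a::monoid_add \<Rightarrow>\<^sub>0 'b::comm_semiring_1"
  shows "pairing w (f * g) = pairing (\<lambda>\<gamma>. pairing (\<lambda>\<alpha>. w (\<gamma> + \<alpha>)) g) f"
  by (induction f rule: poly_mapping_add_single_induct)
     (simp_all add: distrib_right pairing_add pairing_single_mult mult.commute)

lemma pairing_ideal_gen_eq_0:
  assumes "\<And>g \<gamma>. g \<in> set gs \<Longrightarrow> pairing (\<lambda>\<alpha>. w (\<gamma> + \<alpha>)) g = 0"
    and "f \<in> ideal_gen gs"
  shows "pairing w f = 0"
proof -
  obtain rs where len: "length rs = length gs" and f: "f = sum_list (map2 (*) rs gs)"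
    using assms(2) by (auto simp: ideal_gen_def)
  have "pairing w (sum_list (map2 (*) rs gs)) = 0"
    using len assms(1)
  proof (induction rs gs rule: list_induct2)
    case (Cons r rs g gs)
    then show ?case by (simp add: pairing_add pairing_mult)
  qed simp
  with f show ?thesis by simp
qed

lemma one_le_quot_dim:
  assumes "x \<in> V" and "\<And>f. f \<in> U \<Longrightarrow> pairing w f = 0" and "pairing w x \<noteq> 0"
  shows "1 \<le> quot_dim V U"
proof -
  have "indep_mod U {x}"
    unfolding indep_mod_def
  proof (intro allI impI ballI)
    fix c s
    assume "(\<Sum>s\<in>{x}. Const (c s) * s) \<in> U" and "s \<in> {x}"
    then have "c x * pairing w x = 0"
      using assms(2)[of "Const (c x) * x"] by (simp add: Const_def pairing_single_mult)
    with \<open>s \<in> {x}\<close> assms(3) show "c s = 0" by simp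
  qed
  with assms(1) have "enat (card {x}) \<le> quot_dim V U"
    unfolding quot_dim_def by (intro Sup_upper) blast
  then show ?thesis by (simp add: one_enat_def)
qed

definition orbit_weight :: "(nat \<Rightarrow> 'a) \<Rightarrow> 'b::comm_semiring_1 \<Rightarrow> 'a \<Rightarrow> 'b" where
  "orbit_weight \<mu> s \<gamma> = (if \<gamma> \<in> range \<mu> then s ^ inv \<mu> \<gamma> else 0)"

lemma orbit_weight_base: "inj \<mu> \<Longrightarrow> orbit_weight \<mu> s (\<mu> 0) = 1"
  by (simp add: orbit_weight_def)

lemma orbit_weight_add:
  fixes \<mu> :: "nat \<Rightarrow> 'a::cancel_ab_semigroup_add"
  assumes "inj \<mu>" and step: "\<And>t. \<mu> (Suc t) = \<mu> t + \<beta>" and start: "\<And>\<gamma>. \<mu> 0 \<noteq> \<gamma> + \<beta>"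
  shows "orbit_weight \<mu> s (\<gamma> + \<beta>) = s * orbit_weight \<mu> s \<gamma>"
proof (cases "\<gamma> \<in> range \<mu>")
  case True
  then obtain t where "\<gamma> = \<mu> t" by blast
  then show ?thesis
    using assms(1) by (simp add: orbit_weight_def step[symmetric])
next
  case False
  have "\<gamma> + \<beta> \<notin> range \<mu>"
  proof
    assume "\<gamma> + \<beta> \<in> range \<mu>"
    then obtain t where t: "\<gamma> + \<beta> = \<mu> t" by blast
    with start[of \<gamma>] obtain t' where "t = Suc t'" by (cases t) auto
    with t step have "\<gamma> = \<mu> t'" by simp
    with False show False by blast
  qed
  with False show ?thesis by (simp add: orbit_weight_def)
qed

lemma common_shift_nonneg:
  fixes x y A B :: int
  assumes "0 < A" and "0 < B"
  obtains t where "0 \<le> x + t * A" and "0 \<le> y + t * B" and "x + t * A < A \<or> y + t * B < B"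
proof -
  define t where "t = max (- (x div A)) (- (y div B))"
  have "- (x div A) * A \<le> t * A" and "- (y div B) * B \<le> t * B"
    using assms by (intro mult_right_mono; simp add: t_def)+
  then have "x mod A \<le> x + t * A" and "y mod B \<le> y + t * B"
    by (simp_all add: minus_div_mult_eq_mod[symmetric])
  moreover have "x + t * A = x mod A \<or> y + t * B = y mod B"
    by (simp add: t_def max_def minus_div_mult_eq_mod[symmetric])
  ultimately show ?thesis
    using assms by (intro that) (auto intro: order_trans[OF pos_mod_sign])
qed

lemma exists_exponents_of_degree:
  fixes p q m a :: nat and n d :: int
  assumes "0 < p" and "p < q" and "0 < a" and "int m dvd int a * (int q - int p)"
  obtains i j l :: nat where "i < q - p" and "j < a * q \<or> l < a * p"
    and "int i - int p * int j + int q * int l = n" and "(int l - int j) mod int m = d mod int m"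
proof -
  define g where "g = int q - int p"
  define u where "u = (n - int q * d) div g"
  define i where "i = (n - int q * d) mod g"
  have "0 < g" using assms(2) by (simp add: g_def)
  then have i: "0 \<le> i" "i < g" by (simp_all add: i_def)
  obtain t where j: "0 \<le> u + t * (int a * int q)" and l: "0 \<le> d + u + t * (int a * int p)"
    and small:
      "u + t * (int a * int q) < int a * int q \<or> d + u + t * (int a * int p) < int a * int p"
    using common_shift_nonneg[of "int a * int q" "int a * int p"] assms(1-3) by auto
  obtain c where c: "int a * g = int m * c"
    using assms(4) by (auto simp: g_def elim: dvdE)
  have "n = i + g * u + int q * d"
    by (simp add: i_def u_def)
  then have degree:
    "i - int p * (u + t * (int a * int q)) + int q * (d + u + t * (int a * int p)) = n"
    by (simp add: g_def algebra_simps)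
  have "(d + u + t * (int a * int p)) - (u + t * (int a * int q)) = d + (- t * c) * int m"
    using c by (simp add: g_def algebra_simps)
  then have residue:
    "((d + u + t * (int a * int p)) - (u + t * (int a * int q))) mod int m = d mod int m"
    by (simp only: mod_mult_self1)
  show ?thesis
    using i j l small degree residue \<open>0 < g\<close>
    by (intro that[of "nat i" "nat (u + t * (int a * int q))" "nat (d + u + t * (int a * int p))"])
       (simp_all add: g_def nat_less_iff)
qed

lemma Var_power: "Var i ^ n = Poly_Mapping.single (Poly_Mapping.single i n) 1"
  by (induction n) (simp_all add: Var_def mult_single single_add[symmetric] add.commute)

definition mono_chain :: "nat \<Rightarrow> nat \<Rightarrow> nat \<Rightarrow> nat \<Rightarrow> nat \<Rightarrow> nat \<Rightarrow> mono5" where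
  "mono_chain i j l A B t =
     Poly_Mapping.single 0 i + Poly_Mapping.single 1 (j + t * A) + Poly_Mapping.single 3 (l + t * B)"

lemma lookup_mono_chain:
  "Poly_Mapping.lookup (mono_chain i j l A B t) x =
     (if x = 0 then i else if x = 1 then j + t * A else if x = 3 then l + t * B else 0)"
  by (simp add: mono_chain_def lookup_add lookup_single when_def)

lemma inj_mono_chain: "0 < A \<Longrightarrow> inj (mono_chain i j l A B)"
  by (intro injI) (metis lookup_mono_chain add_left_cancel mult_right_cancel zero_neq_one neq0_conv)

lemma pairing_mono_chain_ideal_eq_0:
  assumes "i < e" and "j < A \<or> l < B" and "0 < A"
    and "f \<in> ideal_gen [Var 0 ^ e, Var 2, Var 4, Const s - Var 1 ^ A * Var 3 ^ B]"
  shows "pairing (orbit_weight (mono_chain i j l A B) s) f = 0"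
proof (rule pairing_ideal_gen_eq_0[OF _ assms(4)])
  let ?\<mu> = "mono_chain i j l A B" and ?w = "orbit_weight (mono_chain i j l A B) s"
  define \<beta> :: mono5 where "\<beta> = Poly_Mapping.single 1 A + Poly_Mapping.single 3 B"
  have "inj ?\<mu>"
    using \<open>0 < A\<close> by (rule inj_mono_chain)
  moreover have "?\<mu> (Suc t) = ?\<mu> t + \<beta>" for t
    by (intro poly_mapping_eqI) (simp add: lookup_mono_chain \<beta>_def lookup_add lookup_single when_def)
  moreover have "?\<mu> 0 \<noteq> \<gamma> + \<beta>" for \<gamma>
  proof
    assume "?\<mu> 0 = \<gamma> + \<beta>"
    from arg_cong[OF this, of "\<lambda>\<alpha>. Poly_Mapping.lookup \<alpha> 1"]
      arg_cong[OF this, of "\<lambda>\<alpha>. Poly_Mapping.lookup \<alpha> 3"]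
    show False
      using assms(2) by (simp add: lookup_mono_chain \<beta>_def lookup_add lookup_single)
  qed
  ultimately have shift: "?w (\<gamma> + \<beta>) = s * ?w \<gamma>" for \<gamma>
    by (rule orbit_weight_add)
  have off_chain: "?w (\<gamma> + Poly_Mapping.single x k) = 0"
    if "x = 0 \<and> e \<le> k \<or> x = 2 \<and> 0 < k \<or> x = 4 \<and> 0 < k" for \<gamma> x k
  proof -
    have "\<gamma> + Poly_Mapping.single x k \<notin> range ?\<mu>"
    proof
      assume "\<gamma> + Poly_Mapping.single x k \<in> range ?\<mu>"
      then obtain t where "\<gamma> + Poly_Mapping.single x k = ?\<mu> t" by blast
      from arg_cong[OF this, of "\<lambda>\<alpha>. Poly_Mapping.lookup \<alpha> x"] show False
        using that \<open>i < e\<close> by (auto simp: lookup_mono_chain lookup_add)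
    qed
    then show ?thesis by (simp add: orbit_weight_def)
  qed
  have gens: "[Var 0 ^ e, Var 2, Var 4, Const s - Var 1 ^ A * Var 3 ^ B] =
    [Poly_Mapping.single (Poly_Mapping.single 0 e) 1,
     Poly_Mapping.single (Poly_Mapping.single 2 1) 1,
     Poly_Mapping.single (Poly_Mapping.single 4 1) 1,
     Poly_Mapping.single 0 s - Poly_Mapping.single \<beta> 1]"
    unfolding Var_power by (simp add: Var_def Const_def mult_single \<beta>_def)
  fix g \<gamma>
  assume "g \<in> set [Var 0 ^ e, Var 2, Var 4, Const s - Var 1 ^ A * Var 3 ^ B]"
  then show "pairing (\<lambda>\<alpha>. ?w (\<gamma> + \<alpha>)) g = 0"
    unfolding gens using off_chain[of 0 e] off_chain[of 2 1] off_chain[of 4 1] shift[of \<gamma>]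
    by (auto simp: pairing_diff)
qed

lemma one_le_quot_dim_J_ideal:
  fixes p q m a :: nat and n d :: int
  assumes "0 < p" and "p < q" and "0 < a" and "int m dvd int a * (int q - int p)"
  shows "1 \<le> quot_dim (graded_piece p q m n d) (J_ideal p q a s)"
proof -
  obtain i j l where "i < q - p" and "j < a * q \<or> l < a * p"
    and degree: "int i - int p * int j + int q * int l = n"
    and residue: "(int l - int j) mod int m = d mod int m"
    using exists_exponents_of_degree[OF assms] .
  let ?\<mu> = "mono_chain i j l (a * q) (a * p)"
  have "0 < a * q" using assms(2,3) by simp
  show ?thesis
  proof (rule one_le_quot_dim)
    show "Poly_Mapping.single (?\<mu> 0) 1 \<in> graded_piece p q m n d"
      using degree residue by (simp add: graded_piece_def degZ_def degM_def lookup_mono_chain)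
    show "pairing (orbit_weight ?\<mu> s) f = 0" if "f \<in> J_ideal p q a s" for f
      using \<open>i < q - p\<close> \<open>j < a * q \<or> l < a * p\<close> \<open>0 < a * q\<close> that
      unfolding J_ideal_def by (rule pairing_mono_chain_ideal_eq_0)
    show "pairing (orbit_weight ?\<mu> s) (Poly_Mapping.single (?\<mu> 0) 1) \<noteq> 0"
      using inj_mono_chain[OF \<open>0 < a * q\<close>] by (simp add: orbit_weight_base)
  qed
qed

theorem lemma4p7:
  fixes p q m :: nat
  assumes "0 < p" and "p < q" and "coprime p q" and "0 < m"
  defines "k \<equiv> gcd m (q - p)"
  defines "a \<equiv> m div k"
  shows "\<forall>n d :: int.
           quot_dim (graded_piece p q m n d) (J_ideal p q a 1) \<ge> 1 \<and>
           quot_dim (graded_piece p q m n d) (J_ideal p q a 0) \<ge> 1"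
proof -
  have m_eq: "m = a * k"
    by (simp add: a_def k_def)
  with \<open>0 < m\<close> have "0 < a"
    by simp
  have "k dvd q - p"
    by (simp add: k_def)
  then have "m dvd a * (q - p)"
    by (simp add: m_eq)
  then have "int m dvd int a * (int q - int p)"
    using \<open>p < q\<close> by (metis of_nat_diff less_imp_le of_nat_dvd_iff of_nat_mult)
  then show ?thesis
    using one_le_quot_dim_J_ideal[OF \<open>0 < p\<close> \<open>p < q\<close> \<open>0 < a\<close>] by blast
qed

end
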